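(* Let $\Gamma$ be a class of continuous, nondecreasing, nonnegative functions $\mathbb{R}\to\mathbb{R}$ such that for every compact $K\subset\mathbb{R}$, every continuous nondecreasing nonnegative $h:K\to\mathbb{R}$ and every $\eta>0$ there is $\gamma\in\Gamma$ with $\sup_K|h-\gamma|<\eta$. Let $\mathcal{G}$ be a class of convex real functions that are continuously differentiable on an open set containing $[0,1]^d$, such that for every $R(\boldsymbol{x})=\sum_{i=1}^N\psi_i(\boldsymbol{a}_i^\top\boldsymbol{x}+b_i)$ with each $\psi_i\in C^1(\mathbb{R})$ convex, and every $\eta>0$, there is $G\in\mathcal{G}$ with $\sup_{[0,1]^d}\|\nabla R-\nabla G\|<\eta$. Let $F(\boldsymbol{x})=T\big(\sum_{i=1}^N\psi_i(\boldsymbol{a}_i^\top\boldsymbol{x}+b_i)\big)$ on $[0,1]^d$, where $T\in C^1(\mathbb{R})$ is convex and nondecreasing and each $\psi_i\in C^1(\mathbb{R})$ is convex. Then for every $\epsilon>0$ there exist $\gamma\in\Gamma$, $G\in\mathcal{G}$ and $\beta\in\mathbb{R}$ such that $h(\boldsymbol{x})=\gamma(G(\boldsymbol{x})+\beta)\nabla G(\boldsymbol{x})$ satisfies $\sup_{\boldsymbol{x}\in[0,1]^d}\|\nabla F(\boldsymbol{x})-h(\boldsymbol{x})\|<\epsilon$. Moreover every such $h$ (with $\gamma\in\Gamma$, $G\in\mathcal{G}$, $\beta\in\mathbb{R}$) is the gradient of a convex $C^1$ function on $[0,1]^d$.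
   Context: $C^1(\mathbb{R})$: continuously differentiable real functions on $\mathbb{R}$. $\|\cdot\|$ is the Euclidean norm. *)

theory Defs
  imports "HOL-Analysis.Analysis"
begin

text \<open>The unit cube [0,1]^d inside real^'n (d = CARD('n)).\<close>
definition unit_cube :: "(real^'n) set" where
  "unit_cube = cbox 0 1"

definition grad :: "(real^'n \<Rightarrow> real) \<Rightarrow> real^'n \<Rightarrow> real^'n" where
  "grad f x = (THE D. GDERIV f x :> D)"

definition C1_on :: "(real^'n) set \<Rightarrow> (real^'n \<Rightarrow> real) \<Rightarrow> bool" where
  "C1_on S f \<longleftrightarrow> (\<forall>x\<in>S. f differentiable (at x)) \<and> continuous_on S (grad f)"

definition ridge_sum :: "nat \<Rightarrow> (nat \<Rightarrow> real \<Rightarrow> real) \<Rightarrow> (nat \<Rightarrow> real^'n) \<Rightarrow> (nat \<Rightarrow> real)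
    \<Rightarrow> real^'n \<Rightarrow> real" where
  "ridge_sum N \<psi> a b x = (\<Sum>i=1..N. \<psi> i (a i \<bullet> x + b i))"

end

theory Submission
  imports Defs
begin

text \<open>
  Write \<open>R\<close> for the ridge sum, so that \<open>\<nabla>F = T'(R) \<nabla>R\<close>. Convexity and monotonicity of \<open>T\<close>
  make \<open>T'\<close> continuous, nondecreasing and nonnegative, so it can be approximated by some
  \<open>\<gamma> \<in> \<Gamma>\<close> on a compact interval around the range of \<open>R\<close>; and \<open>\<nabla>R\<close> is approximated by \<open>\<nabla>G\<close>
  with \<open>G \<in> \<G>\<close>. With \<open>\<beta> = R(0) - G(0)\<close> the mean value inequality makes \<open>G + \<beta>\<close> uniformly
  close to \<open>R\<close> on the cube, and uniform continuity of \<open>T'\<close> turns all this into a uniform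
  bound on \<open>T'(R) \<nabla>R - \<gamma>(G + \<beta>) \<nabla>G\<close>.
  Conversely, an antiderivative \<open>\<Gamma>\<^sub>0\<close> of \<open>\<gamma>\<close> is convex and nondecreasing, hence
  \<open>\<Gamma>\<^sub>0(G + \<beta>)\<close> is a convex \<open>C\<^sup>1\<close> potential of \<open>\<gamma>(G + \<beta>) \<nabla>G\<close>.
\<close>

lemma linear_eq_inner_Basis_sum:
  fixes f :: "'a::euclidean_space \<Rightarrow> real"
  assumes "linear f"
  shows "f h = h \<bullet> (\<Sum>i\<in>Basis. f i *\<^sub>R i)"
proof -
  have "f h = f (\<Sum>i\<in>Basis. (h \<bullet> i) *\<^sub>R i)" by (simp add: euclidean_representation)
  also have "\<dots> = (\<Sum>i\<in>Basis. (h \<bullet> i) * f i)" using assms by (simp add: linear_sum linear_scale)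
  also have "\<dots> = h \<bullet> (\<Sum>i\<in>Basis. f i *\<^sub>R i)" by (simp add: inner_sum_right mult.commute)
  finally show ?thesis .
qed

lemma GDERIV_unique:
  fixes f :: "'a::euclidean_space \<Rightarrow> real"
  assumes "GDERIV f x :> D" "GDERIV f x :> D'"
  shows "D = D'"
proof -
  have "(\<lambda>h. h \<bullet> D) = (\<lambda>h. h \<bullet> D')"
    using assms unfolding gderiv_def by (rule has_derivative_unique)
  then show ?thesis by (metis euclidean_eqI inner_commute)
qed

lemma grad_eqI: "GDERIV f x :> D \<Longrightarrow> grad f x = D"
  unfolding grad_def by (metis GDERIV_unique the_equality)

lemma GDERIV_grad:
  assumes "f differentiable (at x)"
  shows "GDERIV f x :> grad f x"
proof -
  obtain f' where f': "(f has_derivative f') (at x)"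
    using assms by (auto simp: differentiable_def)
  then have "f' = (\<lambda>h. h \<bullet> (\<Sum>i\<in>Basis. f' i *\<^sub>R i))"
    using has_derivative_linear linear_eq_inner_Basis_sum by blast
  then have "GDERIV f x :> (\<Sum>i\<in>Basis. f' i *\<^sub>R i)"
    unfolding gderiv_def using f' by simp
  then show ?thesis using grad_eqI by metis
qed

lemma C1_on_GDERIV: "C1_on U f \<Longrightarrow> x \<in> U \<Longrightarrow> GDERIV f x :> grad f x"
  unfolding C1_on_def by (blast intro: GDERIV_grad)

lemma C1_on_imp_continuous_on: "C1_on U f \<Longrightarrow> continuous_on U f"
  unfolding C1_on_def
  by (meson continuous_at_imp_continuous_on differentiable_imp_continuous_within)

lemma C1_on_subset: "C1_on U f \<Longrightarrow> S \<subseteq> U \<Longrightarrow> C1_on S f"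
  unfolding C1_on_def by (auto elim: continuous_on_subset)

lemma C1_onI:
  assumes "\<And>x. x \<in> U \<Longrightarrow> GDERIV f x :> f' x" and "continuous_on U f'"
  shows "C1_on U f"
  unfolding C1_on_def
proof
  show "\<forall>x\<in>U. f differentiable (at x)"
    using assms(1) unfolding gderiv_def differentiable_def by blast
  show "continuous_on U (grad f)"
    using assms grad_eqI continuous_on_cong by metis
qed

lemma GDERIV_bound_imp_Lipschitz:
  fixes f :: "'a::real_inner \<Rightarrow> real"
  assumes "convex S"
    and "\<And>y. y \<in> S \<Longrightarrow> GDERIV f y :> f' y" "\<And>y. y \<in> S \<Longrightarrow> norm (f' y) \<le> B"
    and "x \<in> S" "y \<in> S"
  shows "\<bar>f x - f y\<bar> \<le> B * norm (x - y)"
proof -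
  have "norm (f x - f y) \<le> B * norm (x - y)"
  proof (rule differentiable_bound[where f'="\<lambda>y h. h \<bullet> f' y"])
    fix y assume y: "y \<in> S"
    then show "(f has_derivative (\<lambda>h. h \<bullet> f' y)) (at y within S)"
      using assms(2) unfolding gderiv_def by (blast intro: has_derivative_at_withinI)
    show "onorm (\<lambda>h. h \<bullet> f' y) \<le> B"
    proof (rule onorm_bound)
      show "0 \<le> B" using assms(3)[OF y] norm_ge_zero order_trans by blast
      fix h
      have "norm (h \<bullet> f' y) \<le> norm h * norm (f' y)"
        using Cauchy_Schwarz_ineq2 by simp
      also have "\<dots> \<le> norm h * B" using assms(3)[OF y] by (simp add: mult_left_mono)
      finally show "norm (h \<bullet> f' y) \<le> B * norm h" by (simp add: mult.commute)
    qed
  qed (use assms in auto)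
  then show ?thesis by simp
qed

lemma GDERIV_close_imp_close_up_to_constant:
  fixes S :: "'a::real_inner set"
  assumes "bounded S" "convex S" "x\<^sub>0 \<in> S" "\<eta> > 0"
  obtains \<eta>' where "\<eta>' > 0" "\<eta>' \<le> \<eta>"
    "\<And>f g f' g' x. \<forall>y\<in>S. GDERIV f y :> f' y \<Longrightarrow> \<forall>y\<in>S. GDERIV g y :> g' y \<Longrightarrow>
       \<forall>y\<in>S. norm (f' y - g' y) < \<eta>' \<Longrightarrow> x \<in> S \<Longrightarrow> \<bar>f x - (g x + (f x\<^sub>0 - g x\<^sub>0))\<bar> < \<eta>"
proof -
  have "bounded ((\<lambda>y. y - x\<^sub>0) ` S)"
    using assms(1) by (simp add: bounded_translation_minus)
  then obtain D where D: "D > 0" "\<And>y. y \<in> S \<Longrightarrow> norm (y - x\<^sub>0) \<le> D"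
    by (auto elim: bounded_normE)
  show thesis
  proof (rule that[of "\<eta> / (D + 1)"])
    show "\<eta> / (D + 1) > 0" "\<eta> / (D + 1) \<le> \<eta>"
      using D(1) assms(4) by (auto simp: field_simps)
    fix f g f' g' x
    assume f: "\<forall>y\<in>S. GDERIV f y :> f' y" and g: "\<forall>y\<in>S. GDERIV g y :> g' y"
      and fg: "\<forall>y\<in>S. norm (f' y - g' y) < \<eta> / (D + 1)" and x: "x \<in> S"
    have "\<bar>(f x - g x) - (f x\<^sub>0 - g x\<^sub>0)\<bar> \<le> \<eta> / (D + 1) * norm (x - x\<^sub>0)"
      using assms(2) _ _ x assms(3)
    proof (rule GDERIV_bound_imp_Lipschitz[where f'="\<lambda>y. f' y - g' y"])
      show "\<And>y. y \<in> S \<Longrightarrow> GDERIV (\<lambda>x. f x - g x) y :> f' y - g' y"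
        using f g by (simp add: GDERIV_diff)
      show "\<And>y. y \<in> S \<Longrightarrow> norm (f' y - g' y) \<le> \<eta> / (D + 1)"
        using fg by (simp add: less_imp_le)
    qed
    also have "\<dots> \<le> \<eta> / (D + 1) * D"
      using D x assms(4) by (intro mult_left_mono) auto
    also have "\<dots> < \<eta>"
      using D(1) assms(4) by (simp add: field_simps)
    finally show "\<bar>f x - (g x + (f x\<^sub>0 - g x\<^sub>0))\<bar> < \<eta>" by argo
  qed
qed

lemma continuous_on_compact_normE:
  assumes "compact S" "continuous_on S f"
  obtains B where "B > 0" "\<And>x. x \<in> S \<Longrightarrow> norm (f x) \<le> B"
  using compact_imp_bounded[OF compact_continuous_image[OF assms(2,1)]]
  by (auto elim!: bounded_normE)

lemma norm_scaleR_diff_le: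
  "norm (a *\<^sub>R p - c *\<^sub>R q) \<le> \<bar>a - c\<bar> * norm p + \<bar>c\<bar> * norm (p - q)"
proof -
  have "a *\<^sub>R p - c *\<^sub>R q = (a - c) *\<^sub>R p + c *\<^sub>R (p - q)"
    by (simp add: algebra_simps)
  then show ?thesis by (metis norm_scaleR norm_triangle_ineq)
qed

lemma scaled_field_perturbation:
  fixes R :: "'a::topological_space \<Rightarrow> real" and p :: "'a \<Rightarrow> 'b::real_normed_vector"
  assumes S: "compact S" "continuous_on S R" "continuous_on S p"
    and g: "continuous_on UNIV g" and \<epsilon>: "\<epsilon> > 0"
  obtains K e \<eta> where "compact K" "e > 0" "\<eta> > 0"
    "\<And>\<gamma> x t q. \<forall>s\<in>K. \<bar>g s - \<gamma> s\<bar> < e \<Longrightarrow> x \<in> S \<Longrightarrow> \<bar>R x - t\<bar> < \<eta> \<Longrightarrow>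
       norm (p x - q) < \<eta> \<Longrightarrow> norm (g (R x) *\<^sub>R p x - \<gamma> t *\<^sub>R q) < \<epsilon>"
proof -
  obtain C where C: "\<And>x. x \<in> S \<Longrightarrow> \<bar>R x\<bar> \<le> C"
    using continuous_on_compact_normE[OF S(1,2)] by (metis real_norm_def)
  obtain B where B: "B > 0" "\<And>x. x \<in> S \<Longrightarrow> norm (p x) \<le> B"
    using continuous_on_compact_normE[OF S(1,3)] by blast
  define K where "K = {-C-1..C+1}"
  have K: "compact K" unfolding K_def by simp
  have gK: "continuous_on K g" using g by (rule continuous_on_subset) simp
  obtain L where L: "L > 0" "\<And>s. s \<in> K \<Longrightarrow> \<bar>g s\<bar> \<le> L"
    using continuous_on_compact_normE[OF K gK] by (metis real_norm_def)
  define e where "e = min 1 (\<epsilon> / (4 * B))"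
  have e: "e > 0" using \<epsilon> B(1) by (simp add: e_def)
  obtain \<delta> where \<delta>: "\<delta> > 0" "\<And>s t. s \<in> K \<Longrightarrow> t \<in> K \<Longrightarrow> \<bar>s - t\<bar> < \<delta> \<Longrightarrow> \<bar>g s - g t\<bar> < e"
    using compact_uniformly_continuous[OF gK K] e
    unfolding uniformly_continuous_on_def dist_real_def by metis
  define \<eta> where "\<eta> = min (min \<delta> 1) (\<epsilon> / (4 * (L + 1)))"
  show thesis
  proof (rule that[OF K e])
    show "\<eta> > 0" using \<delta>(1) \<epsilon> L(1) by (simp add: \<eta>_def)
    fix \<gamma> x t q
    assume \<gamma>: "\<forall>s\<in>K. \<bar>g s - \<gamma> s\<bar> < e" and x: "x \<in> S"
      and t: "\<bar>R x - t\<bar> < \<eta>" and q: "norm (p x - q) < \<eta>"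
    have RK: "R x \<in> K" and tK: "t \<in> K"
      using C[OF x] t by (auto simp: K_def \<eta>_def abs_le_iff abs_less_iff)
    have "\<bar>g (R x) - g t\<bar> < e" using \<delta>(2)[OF RK tK] t by (simp add: \<eta>_def)
    then have gap: "\<bar>g (R x) - \<gamma> t\<bar> \<le> 2 * e" using \<gamma> tK by fastforce
    have \<gamma>t: "\<bar>\<gamma> t\<bar> \<le> L + 1" using \<gamma> L(2) tK e_def by fastforce
    have "norm (g (R x) *\<^sub>R p x - \<gamma> t *\<^sub>R q) \<le> \<bar>g (R x) - \<gamma> t\<bar> * norm (p x) + \<bar>\<gamma> t\<bar> * norm (p x - q)"
      by (rule norm_scaleR_diff_le)
    also have "\<dots> \<le> 2 * e * B + (L + 1) * \<eta>"
      using gap \<gamma>t B(2)[OF x] q by (intro add_mono mult_mono) auto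
    also have "\<dots> < \<epsilon>"
    proof -
      have "e \<le> \<epsilon> / (4 * B)" by (simp add: e_def)
      then have "2 * e * B \<le> \<epsilon> / 2" using B(1) by (simp add: pos_le_divide_eq)
      moreover have "(L + 1) * \<eta> \<le> \<epsilon> / 4"
      proof -
        have "\<eta> \<le> \<epsilon> / (4 * (L + 1))" by (simp add: \<eta>_def)
        then show ?thesis using L(1) by (simp add: pos_le_divide_eq algebra_simps)
      qed
      ultimately show ?thesis using \<epsilon> by linarith
    qed
    finally show "norm (g (R x) *\<^sub>R p x - \<gamma> t *\<^sub>R q) < \<epsilon>" .
  qed
qed

lemma scaled_gradient_perturbation:
  fixes R :: "real^'n \<Rightarrow> real"
  assumes S: "compact S" "convex S" "x\<^sub>0 \<in> S" and R: "C1_on S R"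
    and g: "continuous_on UNIV g" and \<epsilon>: "\<epsilon> > 0"
  obtains K e \<eta> where "compact K" "e > 0" "\<eta> > 0"
    "\<And>\<gamma> G. \<forall>s\<in>K. \<bar>g s - \<gamma> s\<bar> < e \<Longrightarrow> \<forall>x\<in>S. GDERIV G x :> grad G x \<Longrightarrow>
       \<forall>x\<in>S. norm (grad R x - grad G x) < \<eta> \<Longrightarrow>
       \<forall>x\<in>S. norm (g (R x) *\<^sub>R grad R x - \<gamma> (G x + (R x\<^sub>0 - G x\<^sub>0)) *\<^sub>R grad G x) < \<epsilon>"
proof -
  have "continuous_on S R" "continuous_on S (grad R)"
    using C1_on_imp_continuous_on[OF R] R unfolding C1_on_def by auto
  then obtain K e \<eta> where K: "compact K" "e > 0" "\<eta> > 0" and stable: "\<And>\<gamma> x t q.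
      \<forall>s\<in>K. \<bar>g s - \<gamma> s\<bar> < e \<Longrightarrow> x \<in> S \<Longrightarrow> \<bar>R x - t\<bar> < \<eta> \<Longrightarrow>
      norm (grad R x - q) < \<eta> \<Longrightarrow> norm (g (R x) *\<^sub>R grad R x - \<gamma> t *\<^sub>R q) < \<epsilon>"
    using scaled_field_perturbation[OF S(1) _ _ g \<epsilon>] by blast
  obtain \<eta>' where \<eta>': "\<eta>' > 0" "\<eta>' \<le> \<eta>" and close: "\<And>(f :: real^'n \<Rightarrow> real) G f' G' x.
      \<forall>y\<in>S. GDERIV f y :> f' y \<Longrightarrow> \<forall>y\<in>S. GDERIV G y :> G' y \<Longrightarrow>
      \<forall>y\<in>S. norm (f' y - G' y) < \<eta>' \<Longrightarrow> x \<in> S \<Longrightarrow> \<bar>f x - (G x + (f x\<^sub>0 - G x\<^sub>0))\<bar> < \<eta>"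
    using GDERIV_close_imp_close_up_to_constant[OF compact_imp_bounded[OF S(1)] S(2,3) K(3)]
    by metis
  show thesis
  proof (rule that[OF K(1,2) \<eta>'(1)], intro ballI)
    fix \<gamma> G x
    assume \<gamma>: "\<forall>s\<in>K. \<bar>g s - \<gamma> s\<bar> < e" and G: "\<forall>x\<in>S. GDERIV G x :> grad G x"
      and RG: "\<forall>x\<in>S. norm (grad R x - grad G x) < \<eta>'" and x: "x \<in> S"
    have "\<bar>R x - (G x + (R x\<^sub>0 - G x\<^sub>0))\<bar> < \<eta>"
      using close[OF _ G RG x] C1_on_GDERIV[OF R] by blast
    moreover have "norm (grad R x - grad G x) < \<eta>" using RG \<eta>'(2) x by fastforce
    ultimately show "norm (g (R x) *\<^sub>R grad R x - \<gamma> (G x + (R x\<^sub>0 - G x\<^sub>0)) *\<^sub>R grad G x) < \<epsilon>"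
      using stable[OF \<gamma> x] by blast
  qed
qed

lemma convex_mono_C1_derivE:
  fixes f :: "real \<Rightarrow> real"
  assumes "f C1_differentiable_on UNIV" "convex_on UNIV f" "mono f"
  obtains f' where "\<And>x. (f has_real_derivative f' x) (at x)" "continuous_on UNIV f'"
    "mono f'" "\<And>x. 0 \<le> f' x"
proof -
  obtain f' where f': "\<And>x. (f has_real_derivative f' x) (at x)" "continuous_on UNIV f'"
    using assms(1) unfolding C1_differentiable_on_def has_real_derivative_iff_has_vector_derivative
    by blast
  have "mono f'"
  proof
    fix s t :: real assume "s \<le> t"
    have "f' s * (t - s) \<le> f t - f s" "f' t * (s - t) \<le> f s - f t"
      using convex_on_imp_above_tangent[OF assms(2)] f'(1) by auto
    then have "0 \<le> (f' t - f' s) * (t - s)" by (simp add: algebra_simps)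
    then show "f' s \<le> f' t" using \<open>s \<le> t\<close> by (cases "s = t") (auto simp: zero_le_mult_iff)
  qed
  moreover have "0 \<le> f' x" for x
    using mono_on_imp_deriv_nonneg[of UNIV f "f' x" x] assms(3) f'(1)
    by (simp add: mono_def mono_on_def)
  ultimately show thesis using f' that by blast
qed

lemma integral_has_real_derivative_at:
  fixes g :: "real \<Rightarrow> real"
  assumes "continuous_on UNIV g" "a < t"
  shows "((\<lambda>u. integral {a..u} g) has_real_derivative g t) (at t)"
proof -
  have "((\<lambda>u. integral {a..u} g) has_real_derivative g t) (at t within {a..t+1})"
    using assms by (intro integral_has_real_derivative) (auto elim: continuous_on_subset)
  moreover have "at t within {a..t+1} = at t" using assms by (intro at_within_Icc_at) auto
  ultimately show ?thesis by simp
qed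

lemma convex_mono_antiderivative:
  fixes \<gamma> :: "real \<Rightarrow> real"
  assumes \<gamma>: "continuous_on UNIV \<gamma>" "mono \<gamma>" "\<And>t. 0 \<le> \<gamma> t"
  shows "convex_on {a<..} (\<lambda>t. integral {a..t} \<gamma>)" "mono_on {a<..} (\<lambda>t. integral {a..t} \<gamma>)"
proof -
  have deriv: "((\<lambda>t. integral {a..t} \<gamma>) has_real_derivative \<gamma> t) (at t)" if "t \<in> {a<..}" for t
    using \<gamma>(1) that by (simp add: integral_has_real_derivative_at)
  show "convex_on {a<..} (\<lambda>t. integral {a..t} \<gamma>)"
  proof (rule convex_on_realI[OF _ deriv])
    show "connected {a<..}" by simp
  qed (use \<gamma>(2) in \<open>auto simp: mono_def\<close>)
  show "mono_on {a<..} (\<lambda>t. integral {a..t} \<gamma>)"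
  proof (rule mono_onI)
    fix s t assume "s \<in> {a<..}" "s \<le> t"
    then show "integral {a..s} \<gamma> \<le> integral {a..t} \<gamma>"
      using deriv_nonneg_imp_mono[of s t "\<lambda>t. integral {a..t} \<gamma>" \<gamma>] deriv \<gamma>(3) by force
  qed
qed

lemma convex_on_compose_mono:
  fixes G :: "'a::real_vector \<Rightarrow> real"
  assumes G: "convex_on S G" "G ` S \<subseteq> I" and f: "convex I" "convex_on I f" "mono_on I f"
  shows "convex_on S (\<lambda>x. f (G x))"
proof (rule convex_onI)
  show "convex S" using G(1) by (rule convex_on_imp_convex)
  fix t :: real and x y assume t: "0 < t" "t < 1" and xy: "x \<in> S" "y \<in> S"
  have GI: "G x \<in> I" "G y \<in> I" using G(2) xy by auto
  have "(1 - t) *\<^sub>R x + t *\<^sub>R y \<in> S"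
    using convexD[OF \<open>convex S\<close> xy] t by simp
  moreover have "(1 - t) * G x + t * G y \<in> I"
    using convexD[OF f(1) GI] t by simp
  moreover have "G ((1 - t) *\<^sub>R x + t *\<^sub>R y) \<le> (1 - t) * G x + t * G y"
    using convex_onD[OF G(1)] t xy by simp
  ultimately have "f (G ((1 - t) *\<^sub>R x + t *\<^sub>R y)) \<le> f ((1 - t) * G x + t * G y)"
    using G(2) by (auto intro: mono_onD[OF f(3)])
  also have "\<dots> \<le> (1 - t) * f (G x) + t * f (G y)"
    using convex_onD[OF f(2) _ _ GI] t by simp
  finally show "f (G ((1 - t) *\<^sub>R x + t *\<^sub>R y)) \<le> (1 - t) * f (G x) + t * f (G y)" .
qed

lemma convex_C1_potential_of_scaled_gradient:
  fixes G :: "real^'n \<Rightarrow> real" and \<gamma> :: "real \<Rightarrow> real"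
  assumes \<gamma>: "continuous_on UNIV \<gamma>" "mono \<gamma>" "\<And>t. 0 \<le> \<gamma> t"
    and S: "compact S" and G: "convex_on S G" "open U" "S \<subseteq> U" "C1_on U G"
  shows "\<exists>\<Phi>. convex_on S \<Phi> \<and> (\<exists>V. open V \<and> S \<subseteq> V \<and> C1_on V \<Phi>) \<and>
           (\<forall>x\<in>S. GDERIV \<Phi> x :> \<gamma> (G x + \<beta>) *\<^sub>R grad G x)"
proof -
  have contG: "continuous_on U (\<lambda>x. G x + \<beta>)"
    using C1_on_imp_continuous_on[OF G(4)] by (auto intro: continuous_intros)
  obtain B where B: "\<And>x. x \<in> S \<Longrightarrow> \<bar>G x + \<beta>\<bar> \<le> B"
    using continuous_on_compact_normE[OF S continuous_on_subset[OF contG G(3)]]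
    by (metis real_norm_def)
  define a where "a = - B - 1"
  have a: "G x + \<beta> \<in> {a<..}" if "x \<in> S" for x
    using B[OF that] by (simp add: a_def abs_le_iff)
  \<comment> \<open>\<open>integral {a..t}\<close> vanishes for \<open>t < a\<close>, so \<open>\<Gamma>\<close> is an antiderivative only on \<open>{a<..}\<close>.\<close>
  define \<Gamma> where "\<Gamma> t = integral {a..t} \<gamma>" for t
  have \<Gamma>': "(\<Gamma> has_real_derivative \<gamma> t) (at t)" if "t \<in> {a<..}" for t
    unfolding \<Gamma>_def[abs_def] using \<gamma>(1) that by (simp add: integral_has_real_derivative_at)
  have \<Gamma>_convex: "convex_on {a<..} \<Gamma>" and \<Gamma>_mono: "mono_on {a<..} \<Gamma>"
    using convex_mono_antiderivative[OF \<gamma>, of a] by (simp_all add: \<Gamma>_def[abs_def])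
  have "convex_on S (\<lambda>x. G x + \<beta>)"
    by (rule convex_on_add[OF G(1)]) (simp add: convex_on_const convex_on_imp_convex[OF G(1)])
  then have convex: "convex_on S (\<lambda>x. \<Gamma> (G x + \<beta>))"
    by (rule convex_on_compose_mono[OF _ _ _ \<Gamma>_convex \<Gamma>_mono]) (use a in auto)
  define V where "V = U \<inter> (\<lambda>x. G x + \<beta>) -` {a<..}"
  have V: "open V" "S \<subseteq> V" "V \<subseteq> U"
    using continuous_open_preimage[OF contG G(2) open_greaterThan, of a] a G(3)
    unfolding V_def by blast+
  have deriv: "GDERIV (\<lambda>x. \<Gamma> (G x + \<beta>)) x :> \<gamma> (G x + \<beta>) *\<^sub>R grad G x" if "x \<in> V" for x
  proof -
    have "GDERIV (\<lambda>x. G x + \<beta>) x :> grad G x + 0"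
      using GDERIV_add[OF C1_on_GDERIV[OF G(4)] GDERIV_const] that V(3) by blast
    moreover have "G x + \<beta> \<in> {a<..}" using that by (simp add: V_def)
    ultimately show ?thesis using GDERIV_DERIV_compose \<Gamma>' by fastforce
  qed
  have "continuous_on V (\<lambda>x. G x + \<beta>)" "continuous_on V (grad G)"
    using contG G(4) V(3) unfolding C1_on_def by (auto elim: continuous_on_subset)
  then have "continuous_on V (\<lambda>x. \<gamma> (G x + \<beta>) *\<^sub>R grad G x)"
    by (intro continuous_on_scaleR continuous_on_compose2[OF \<gamma>(1)]) auto
  then have "C1_on V (\<lambda>x. \<Gamma> (G x + \<beta>))"
    using deriv by (rule C1_onI[rotated])
  then show ?thesis using convex V deriv by blast
qed

lemma ridge_sum_C1_on:
  assumes "\<forall>i\<in>{1..N}. \<psi> i C1_differentiable_on UNIV"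
  shows "C1_on UNIV (ridge_sum N \<psi> a b)"
proof -
  have "\<forall>i\<in>{1..N}. \<exists>\<psi>'. (\<forall>t. (\<psi> i has_real_derivative \<psi>' t) (at t)) \<and> continuous_on UNIV \<psi>'"
    using assms unfolding C1_differentiable_on_def has_real_derivative_iff_has_vector_derivative
    by blast
  then obtain \<psi>' where \<psi>': "\<And>i t. i \<in> {1..N} \<Longrightarrow> (\<psi> i has_real_derivative \<psi>' i t) (at t)"
      "\<And>i. i \<in> {1..N} \<Longrightarrow> continuous_on UNIV (\<psi>' i)"
    by metis
  show ?thesis
  proof (rule C1_onI)
    fix x :: "real^'a"
    have "GDERIV (\<lambda>x. \<psi> i (a i \<bullet> x + b i)) x :> \<psi>' i (a i \<bullet> x + b i) *\<^sub>R a i"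
      if "i \<in> {1..N}" for i
    proof -
      have "GDERIV (\<lambda>x. a i \<bullet> x + b i) x :> a i"
        by (auto intro!: derivative_eq_intros simp: gderiv_def inner_commute)
      then show ?thesis using GDERIV_DERIV_compose \<psi>'(1)[OF that] by blast
    qed
    then show "GDERIV (ridge_sum N \<psi> a b) x :> (\<Sum>i=1..N. \<psi>' i (a i \<bullet> x + b i) *\<^sub>R a i)"
      unfolding gderiv_def ridge_sum_def[abs_def]
      by (auto intro!: has_derivative_sum simp: inner_sum_right)
  next
    show "continuous_on UNIV (\<lambda>x. \<Sum>i=1..N. \<psi>' i (a i \<bullet> x + b i) *\<^sub>R a i)"
    proof (intro continuous_on_sum continuous_on_scaleR continuous_on_const ballI)
      fix i assume "i \<in> {1..N}"
      moreover have "continuous_on UNIV (\<lambda>x. a i \<bullet> x + b i)"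
        by (intro continuous_intros)
      ultimately show "continuous_on UNIV (\<lambda>x. \<psi>' i (a i \<bullet> x + b i))"
        using continuous_on_compose2[OF \<psi>'(2)] by blast
    qed
  qed
qed

theorem theorem6:
  fixes \<Gamma> :: "(real \<Rightarrow> real) set"
    and \<G> :: "(real^'n \<Rightarrow> real) set"
    and T :: "real \<Rightarrow> real"
    and N :: nat and \<psi> :: "nat \<Rightarrow> real \<Rightarrow> real"
    and a :: "nat \<Rightarrow> real^'n" and b :: "nat \<Rightarrow> real"
    and \<epsilon> :: real
  assumes Gamma_class: "\<forall>\<gamma>\<in>\<Gamma>. continuous_on UNIV \<gamma> \<and> mono \<gamma> \<and> (\<forall>t. 0 \<le> \<gamma> t)"
    and Gamma_dense: "\<And>K h \<eta>. compact K \<Longrightarrow> continuous_on K h \<Longrightarrow> mono_on K h \<Longrightarrow>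
        (\<forall>t\<in>K. 0 \<le> h t) \<Longrightarrow> \<eta> > 0 \<Longrightarrow> \<exists>\<gamma>\<in>\<Gamma>. \<forall>t\<in>K. \<bar>h t - \<gamma> t\<bar> < \<eta>"
    and G_class: "\<forall>G\<in>\<G>. convex_on UNIV G \<and>
        (\<exists>U. open U \<and> unit_cube \<subseteq> U \<and> C1_on U G)"
    and G_dense: "\<And>M \<phi> c d \<eta>. (\<forall>i\<in>{1..M}. \<phi> i C1_differentiable_on UNIV \<and> convex_on UNIV (\<phi> i))
        \<Longrightarrow> \<eta> > 0 \<Longrightarrow>
        \<exists>G\<in>\<G>. \<forall>x\<in>unit_cube. norm (grad (ridge_sum M \<phi> c d) x - grad G x) < \<eta>"
    and T_C1: "T C1_differentiable_on UNIV" and T_convex: "convex_on UNIV T" and T_mono: "mono T"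
    and psi: "\<forall>i\<in>{1..N}. \<psi> i C1_differentiable_on UNIV \<and> convex_on UNIV (\<psi> i)"
    and eps: "\<epsilon> > 0"
  shows "(\<exists>\<gamma>\<in>\<Gamma>. \<exists>G\<in>\<G>. \<exists>\<beta>::real. \<forall>x\<in>unit_cube.
           norm (grad (\<lambda>y. T (ridge_sum N \<psi> a b y)) x - \<gamma> (G x + \<beta>) *\<^sub>R grad G x) < \<epsilon>)
       \<and> (\<forall>\<gamma>\<in>\<Gamma>. \<forall>G\<in>\<G>. \<forall>\<beta>::real. \<exists>\<Phi> :: real^'n \<Rightarrow> real.
           convex_on unit_cube \<Phi> \<and> (\<exists>U. open U \<and> unit_cube \<subseteq> U \<and> C1_on U \<Phi>) \<and>
           (\<forall>x\<in>unit_cube. GDERIV \<Phi> x :> (\<gamma> (G x + \<beta>) *\<^sub>R grad G x)))"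
proof
  obtain T' where T': "\<And>t. (T has_real_derivative T' t) (at t)" "continuous_on UNIV T'"
      "mono T'" "\<And>t. 0 \<le> T' t"
    using convex_mono_C1_derivE[OF T_C1 T_convex T_mono] by blast
  define R where "R = ridge_sum N \<psi> a b"
  have R: "C1_on UNIV R" unfolding R_def using psi by (simp add: ridge_sum_C1_on)
  have cube: "compact unit_cube" "convex unit_cube" "(0::real^'n) \<in> unit_cube"
    unfolding unit_cube_def by (auto simp: mem_box_cart)
  obtain K e \<eta> where K: "compact K" "e > 0" "\<eta> > 0" and approx: "\<And>\<gamma> G.
      \<forall>s\<in>K. \<bar>T' s - \<gamma> s\<bar> < e \<Longrightarrow> \<forall>x\<in>unit_cube. GDERIV G x :> grad G x \<Longrightarrow>
      \<forall>x\<in>unit_cube. norm (grad R x - grad G x) < \<eta> \<Longrightarrow>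
      \<forall>x\<in>unit_cube. norm (T' (R x) *\<^sub>R grad R x - \<gamma> (G x + (R 0 - G 0)) *\<^sub>R grad G x) < \<epsilon>"
    using scaled_gradient_perturbation[OF cube C1_on_subset[OF R subset_UNIV] T'(2) eps] by blast
  have "continuous_on K T'" "mono_on K T'"
    using T'(2,3) by (auto elim: continuous_on_subset simp: mono_on_def mono_def)
  then obtain \<gamma> where \<gamma>: "\<gamma> \<in> \<Gamma>" "\<forall>s\<in>K. \<bar>T' s - \<gamma> s\<bar> < e"
    using Gamma_dense[OF K(1) _ _ _ K(2)] T'(4) by blast
  obtain G where G: "G \<in> \<G>" "\<forall>x\<in>unit_cube. norm (grad R x - grad G x) < \<eta>"
    using G_dense[OF psi K(3)] unfolding R_def by blast
  have "\<forall>x\<in>unit_cube. GDERIV G x :> grad G x"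
    using G_class G(1) by (blast intro: C1_on_GDERIV)
  moreover have "grad (\<lambda>y. T (R y)) x = T' (R x) *\<^sub>R grad R x" for x
    using GDERIV_DERIV_compose[OF C1_on_GDERIV[OF R UNIV_I] T'(1)] by (rule grad_eqI)
  ultimately show "\<exists>\<gamma>\<in>\<Gamma>. \<exists>G\<in>\<G>. \<exists>\<beta>. \<forall>x\<in>unit_cube.
      norm (grad (\<lambda>y. T (ridge_sum N \<psi> a b y)) x - \<gamma> (G x + \<beta>) *\<^sub>R grad G x) < \<epsilon>"
    using approx[OF \<gamma>(2) _ G(2)] \<gamma>(1) G(1) unfolding R_def by auto
next
  show "\<forall>\<gamma>\<in>\<Gamma>. \<forall>G\<in>\<G>. \<forall>\<beta>. \<exists>\<Phi>. convex_on unit_cube \<Phi> \<and>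
      (\<exists>U. open U \<and> unit_cube \<subseteq> U \<and> C1_on U \<Phi>) \<and>
      (\<forall>x\<in>unit_cube. GDERIV \<Phi> x :> \<gamma> (G x + \<beta>) *\<^sub>R grad G x)"
  proof (intro ballI allI)
    fix \<gamma> G \<beta> assume "\<gamma> \<in> \<Gamma>" "G \<in> \<G>"
    then obtain U where "open U" "unit_cube \<subseteq> U" "C1_on U G" and "convex_on unit_cube G"
      using G_class convex_on_subset[of UNIV G unit_cube] unfolding unit_cube_def by auto
    moreover have "compact (unit_cube :: (real^'n) set)" by (simp add: unit_cube_def)
    ultimately show "\<exists>\<Phi>. convex_on unit_cube \<Phi> \<and> (\<exists>U. open U \<and> unit_cube \<subseteq> U \<and> C1_on U \<Phi>) \<and>
        (\<forall>x\<in>unit_cube. GDERIV \<Phi> x :> \<gamma> (G x + \<beta>) *\<^sub>R grad G x)"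
      using Gamma_class \<open>\<gamma> \<in> \<Gamma>\<close> by (intro convex_C1_potential_of_scaled_gradient) auto
  qed
qed

end
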